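(* Let $\Gamma$ be an Arf numerical semigroup with multiplicity $e$ and conductor $c$. Let $e'\in\Gamma\setminus\{0,e\}$, $\Gamma_{e'}=\{0\}\cup(e'+\Gamma)$ and $c'=c+e'$. Then \[ \delta^2_{\Gamma_{e'}}(c'+e'+k)=\delta^2_\Gamma(c+k)+3\quad\text{for all }k\in\mathbb N. \]
   Context: A numerical semigroup is a subset $\Gamma\subseteq\mathbb N$ containing $0$, closed under addition, with finite complement; write $\Gamma=\{0=\rho_1<\rho_2<\cdots\}$; multiplicity $e=\rho_2$; conductor = least $c$ with $c+\mathbb N\subseteq\Gamma$. $\Gamma$ is Arf if $\rho_i+\rho_j-\rho_k\in\Gamma$ for all $i\ge j\ge k$. For a numerical semigroup $S$: $D_S(x)=\{s\in S:x-s\in S\}$ and $\delta^2_S(m)=\min\{|D_S(m_1)\cup D_S(m_2)|: m\le m_1<m_2,\ m_i\in S\}$. *)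

theory Defs
  imports Main
begin

definition numerical_semigroup :: "nat set \<Rightarrow> bool" where
  "numerical_semigroup S \<longleftrightarrow> 0 \<in> S \<and> (\<forall>x\<in>S. \<forall>y\<in>S. x + y \<in> S) \<and> finite (UNIV - S)"

definition Arf :: "nat set \<Rightarrow> bool" where
  "Arf S \<longleftrightarrow> (\<forall>x\<in>S. \<forall>y\<in>S. \<forall>z\<in>S. x \<ge> y \<and> y \<ge> z \<longrightarrow> x + y - z \<in> S)"

definition multiplicity_ns :: "nat set \<Rightarrow> nat" where
  "multiplicity_ns S = (LEAST x. x \<in> S \<and> x \<noteq> 0)"

definition conductor :: "nat set \<Rightarrow> nat" where
  "conductor S = (LEAST c. \<forall>n\<ge>c. n \<in> S)"

definition D_set :: "nat set \<Rightarrow> nat \<Rightarrow> nat set" where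
  "D_set S x = {s \<in> S. x \<ge> s \<and> x - s \<in> S}"

definition delta2 :: "nat set \<Rightarrow> nat \<Rightarrow> nat" where
  "delta2 S m = Inf {card (D_set S m1 \<union> D_set S m2) | m1 m2.
                      m \<le> m1 \<and> m1 < m2 \<and> m1 \<in> S \<and> m2 \<in> S}"

end

theory Submission
  imports Defs
begin

text \<open>For \<open>x\<close> beyond the conductor shifted by \<open>2e'\<close>, the summand set \<open>D(x)\<close> of
  \<open>{0} \<union> (e' + \<Gamma>)\<close> is \<open>{0, x} \<union> (e' + D\<^sub>\<Gamma>(x - 2e'))\<close>. Hence a pair \<open>n\<^sub>1 < n\<^sub>2\<close> above the
  conductor of \<open>\<Gamma>\<close> gains the three elements \<open>0, n\<^sub>1 + 2e', n\<^sub>2 + 2e'\<close>, except when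
  \<open>n\<^sub>1 + e' \<in> D\<^sub>\<Gamma>(n\<^sub>2)\<close>, where \<open>n\<^sub>1 + 2e'\<close> is already a shifted summand and only two are new.
  Such pairs never realise \<open>\<delta>\<^sup>2\<close>: there \<open>D(n\<^sub>1) \<subseteq> D(n\<^sub>1 + e') \<subseteq> D(n\<^sub>2)\<close>, while the Arf
  property makes \<open>s \<mapsto> s + e' - e\<close> inject \<open>D(n\<^sub>1 + e)\<close> into \<open>D(n\<^sub>1 + e')\<close> missing \<open>e\<close>,
  so the pair \<open>(n\<^sub>1, n\<^sub>1 + e)\<close> is strictly better.\<close>

definition shift_ns :: "nat \<Rightarrow> nat set \<Rightarrow> nat set" where
  "shift_ns a S = {0} \<union> (\<lambda>s. a + s) ` S"

lemma finite_D_set: "finite (D_set S x)"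
  by (rule finite_subset[of _ "{..x}"]) (auto simp: D_set_def)

lemma D_set_mono:
  assumes "\<forall>x\<in>S. \<forall>y\<in>S. x + y \<in> S" "p \<le> q" "q - p \<in> S"
  shows "D_set S p \<subseteq> D_set S q"
proof
  fix s assume "s \<in> D_set S p"
  hence s: "s \<in> S" "s \<le> p" "p - s \<in> S" by (auto simp: D_set_def)
  have "q - s = (p - s) + (q - p)" using s assms by simp
  hence "q - s \<in> S" using assms s by metis
  thus "s \<in> D_set S q" using s assms by (simp add: D_set_def)
qed

lemma numerical_semigroup_ge_conductor:
  assumes "numerical_semigroup S" "conductor S \<le> n"
  shows "n \<in> S"
proof -
  obtain N where "\<forall>x\<in>UNIV - S. x \<le> N"
    using assms(1) finite_nat_set_iff_bounded_le by (auto simp: numerical_semigroup_def)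
  hence "\<forall>n\<ge>Suc N. n \<in> S" by force
  hence "\<forall>n\<ge>conductor S. n \<in> S"
    unfolding conductor_def by (rule LeastI)
  thus ?thesis using assms(2) by blast
qed

lemma multiplicity_ns:
  assumes "numerical_semigroup S"
  shows "multiplicity_ns S \<in> S" "multiplicity_ns S \<noteq> 0"
    and "\<And>x. x \<in> S \<Longrightarrow> x \<noteq> 0 \<Longrightarrow> multiplicity_ns S \<le> x"
proof -
  have "Suc (conductor S) \<in> S"
    using numerical_semigroup_ge_conductor[OF assms] by simp
  hence "\<exists>x. x \<in> S \<and> x \<noteq> 0" by blast
  from LeastI_ex[OF this] show "multiplicity_ns S \<in> S" "multiplicity_ns S \<noteq> 0"
    unfolding multiplicity_ns_def by auto
  show "\<And>x. x \<in> S \<Longrightarrow> x \<noteq> 0 \<Longrightarrow> multiplicity_ns S \<le> x"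
    unfolding multiplicity_ns_def by (rule Least_le) simp
qed

lemma Arf_add_diff:
  assumes "Arf S" "x \<in> S" "y \<in> S" "z \<in> S" "z \<le> x" "z \<le> y"
  shows "x + y - z \<in> S"
proof (cases "y \<le> x")
  case True thus ?thesis using assms unfolding Arf_def by blast
next
  case False
  hence "y + x - z \<in> S" using assms unfolding Arf_def by simp
  thus ?thesis by (simp add: add.commute)
qed

lemma card_D_set_multiplicity_less:
  assumes "numerical_semigroup S" "Arf S" "e = multiplicity_ns S"
    and "a \<in> S" "e < a" "n + a \<in> S" "n + a - e \<in> S"
  shows "card (D_set S (n + e)) < card (D_set S (n + a))"
proof -
  note e = multiplicity_ns[OF assms(1), folded assms(3)]
  define \<phi> where "\<phi> s = (if s = 0 then 0 else s + a - e)" for s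
  have "\<phi> ` D_set S (n + e) \<subseteq> D_set S (n + a) - {e}"
  proof
    fix t assume "t \<in> \<phi> ` D_set S (n + e)"
    then obtain s where t: "t = \<phi> s" and s: "s \<in> S" "s \<le> n + e" "n + e - s \<in> S"
      by (auto simp: D_set_def)
    show "t \<in> D_set S (n + a) - {e}"
    proof (cases "s = 0")
      case True
      thus ?thesis using t assms(1,6) e(2)
        by (simp add: \<phi>_def D_set_def numerical_semigroup_def)
    next
      case False
      have "e \<le> s" using e(3)[OF s(1) False] .
      moreover have "s + a - e \<in> S" using Arf_add_diff[OF assms(2) s(1) assms(4) e(1)] \<open>e \<le> s\<close> assms(5) by simp
      ultimately show ?thesis using False t s assms(5) by (auto simp: \<phi>_def D_set_def)
    qed
  qed
  moreover have "inj_on \<phi> (D_set S (n + e))"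
    using assms(5) by (auto simp: \<phi>_def inj_on_def split: if_splits)
  ultimately have "card (D_set S (n + e)) \<le> card (D_set S (n + a) - {e})"
    by (metis card_inj_on_le finite_D_set finite_Diff)
  moreover have "e \<in> D_set S (n + a)" using e(1) assms(5,7) by (simp add: D_set_def)
  ultimately show ?thesis using finite_D_set by (metis card_Diff1_less order_le_less_trans)
qed

lemma card_union_D_set_not_minimal:
  assumes "numerical_semigroup S" "Arf S" "e = multiplicity_ns S"
    and "a \<in> S" "e < a" "conductor S \<le> n\<^sub>1" "n\<^sub>1 + a \<in> D_set S n\<^sub>2"
  shows "card (D_set S n\<^sub>1 \<union> D_set S (n\<^sub>1 + e)) < card (D_set S n\<^sub>1 \<union> D_set S n\<^sub>2)"
proof -
  have cl: "\<forall>x\<in>S. \<forall>y\<in>S. x + y \<in> S" using assms(1) by (simp add: numerical_semigroup_def)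
  have above: "n \<in> S" if "n\<^sub>1 \<le> n" for n
    using numerical_semigroup_ge_conductor[OF assms(1)] assms(6) that by simp
  have n\<^sub>2: "n\<^sub>1 + a \<le> n\<^sub>2" "n\<^sub>2 - (n\<^sub>1 + a) \<in> S" using assms(7) by (auto simp: D_set_def)
  have "n\<^sub>2 - n\<^sub>1 = a + (n\<^sub>2 - (n\<^sub>1 + a))" using n\<^sub>2(1) by simp
  hence "n\<^sub>2 - n\<^sub>1 \<in> S" using cl assms(4) n\<^sub>2(2) by metis
  hence "D_set S n\<^sub>1 \<subseteq> D_set S n\<^sub>2" using D_set_mono[OF cl] n\<^sub>2(1) by simp
  moreover have "D_set S n\<^sub>1 \<subseteq> D_set S (n\<^sub>1 + e)"
    using D_set_mono[OF cl] multiplicity_ns(1)[OF assms(1)] assms(3) by simp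
  moreover have "n\<^sub>1 + a \<in> S" "n\<^sub>1 + a - e \<in> S" using above assms(5) by simp_all
  hence "card (D_set S (n\<^sub>1 + e)) < card (D_set S (n\<^sub>1 + a))"
    by (rule card_D_set_multiplicity_less[OF assms(1-5)])
  moreover have "card (D_set S (n\<^sub>1 + a)) \<le> card (D_set S n\<^sub>2)"
    using D_set_mono[OF cl n\<^sub>2] by (simp add: card_mono finite_D_set)
  ultimately show ?thesis by (simp add: Un_absorb1)
qed

lemma D_set_shift_ns:
  assumes "2 * a \<le> x" "x - a \<in> S"
  shows "D_set (shift_ns a S) x = {0, x} \<union> (\<lambda>d. a + d) ` D_set S (x - 2 * a)"
proof (intro equalityI subsetI)
  fix s assume "s \<in> D_set (shift_ns a S) x"
  hence s: "s \<in> shift_ns a S" "s \<le> x" "x - s \<in> shift_ns a S" by (auto simp: D_set_def)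
  show "s \<in> {0, x} \<union> (\<lambda>d. a + d) ` D_set S (x - 2 * a)"
  proof (cases "s = 0 \<or> s = x")
    case False
    then obtain d d' where "d \<in> S" "s = a + d" "d' \<in> S" "x - s = a + d'"
      using s by (auto simp: shift_ns_def)
    moreover from this have "x - 2 * a - d = d'" using s(2) by simp
    ultimately have "d \<in> D_set S (x - 2 * a)" using s(2) by (auto simp: D_set_def)
    thus ?thesis using \<open>s = a + d\<close> by blast
  qed auto
next
  fix s assume s: "s \<in> {0, x} \<union> (\<lambda>d. a + d) ` D_set S (x - 2 * a)"
  have "x = a + (x - a)" using assms(1) by simp
  hence x: "x \<in> shift_ns a S" using assms(2) unfolding shift_ns_def by blast
  show "s \<in> D_set (shift_ns a S) x"
  proof (cases "s = 0 \<or> s = x")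
    case True thus ?thesis using x by (auto simp: D_set_def shift_ns_def)
  next
    case False
    then obtain d where d: "s = a + d" "d \<in> S" "d \<le> x - 2 * a" "x - 2 * a - d \<in> S"
      using s by (auto simp: D_set_def)
    have "x - s = a + (x - 2 * a - d)" using d(1,3) assms(1) by simp
    hence "x - s \<in> shift_ns a S" using d(4) unfolding shift_ns_def by blast
    moreover have "s \<in> shift_ns a S" using d(1,2) unfolding shift_ns_def by blast
    ultimately show ?thesis using d(1,3) assms(1) by (simp add: D_set_def)
  qed
qed

lemma card_D_set_shift_ns:
  assumes "a \<noteq> 0" "n\<^sub>1 < n\<^sub>2" "n\<^sub>1 + a \<in> S" "n\<^sub>2 + a \<in> S"
  shows "card (D_set (shift_ns a S) (n\<^sub>1 + 2 * a) \<union> D_set (shift_ns a S) (n\<^sub>2 + 2 * a)) =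
    (if n\<^sub>1 + a \<in> D_set S n\<^sub>2 then 2 else 3) + card (D_set S n\<^sub>1 \<union> D_set S n\<^sub>2)"
proof -
  define B where "B = (\<lambda>d. a + d) ` (D_set S n\<^sub>1 \<union> D_set S n\<^sub>2)"
  have "D_set (shift_ns a S) (n\<^sub>1 + 2 * a) \<union> D_set (shift_ns a S) (n\<^sub>2 + 2 * a) =
      insert 0 (insert (n\<^sub>2 + 2 * a) (insert (n\<^sub>1 + 2 * a) B))"
    using D_set_shift_ns[of a "n\<^sub>1 + 2 * a" S] D_set_shift_ns[of a "n\<^sub>2 + 2 * a" S] assms(3,4)
    unfolding B_def by (auto simp: mult_2 add.assoc)
  moreover have "card B = card (D_set S n\<^sub>1 \<union> D_set S n\<^sub>2)"
    unfolding B_def by (rule card_image) (simp add: inj_on_def)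
  moreover have "0 \<notin> B" "n\<^sub>2 + 2 * a \<notin> B"
    using assms(1,2) by (auto simp: B_def D_set_def)
  moreover have "n\<^sub>1 + 2 * a \<in> B \<longleftrightarrow> n\<^sub>1 + a \<in> D_set S n\<^sub>2"
    using assms(1) by (auto simp: B_def D_set_def mult_2)
  moreover have "finite B" unfolding B_def using finite_D_set by blast
  ultimately show ?thesis using assms(1,2) by (simp add: card_insert_if)
qed

lemma cInf_image_add_penalty:
  fixes f :: "'a \<Rightarrow> nat"
  assumes "P \<noteq> {}" "\<And>p. p \<in> P \<Longrightarrow> bad p \<Longrightarrow> \<exists>q\<in>P. f q < f p"
  shows "Inf ((\<lambda>p. (if bad p then 2 else 3) + f p) ` P) = Inf (f ` P) + 3"
proof -
  have "Inf (f ` P) \<in> f ` P" using assms(1) by (simp add: Inf_nat_def1)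
  then obtain p\<^sub>0 where p\<^sub>0: "p\<^sub>0 \<in> P" "Inf (f ` P) = f p\<^sub>0" by blast
  have min: "f p\<^sub>0 \<le> f p" if "p \<in> P" for p
    using p\<^sub>0(2) that by (metis bdd_below_bot cInf_lower image_eqI)
  have "\<not> bad p\<^sub>0" using assms(2)[OF p\<^sub>0(1)] min leD by blast
  show ?thesis unfolding p\<^sub>0(2)
  proof (rule cInf_eq_minimum)
    show "f p\<^sub>0 + 3 \<in> (\<lambda>p. (if bad p then 2 else 3) + f p) ` P"
      using p\<^sub>0(1) \<open>\<not> bad p\<^sub>0\<close> by force
  next
    fix x assume "x \<in> (\<lambda>p. (if bad p then 2 else 3) + f p) ` P"
    then obtain p where "p \<in> P" "x = (if bad p then 2 else 3) + f p" by blast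
    thus "f p\<^sub>0 + 3 \<le> x"
      using assms(2) min by (cases "bad p") (force intro: less_le_trans)+
  qed
qed

lemma delta2_cofinite:
  assumes "\<forall>n\<ge>m + d. n \<in> S"
  shows "delta2 S (m + d) =
    Inf ((\<lambda>(n\<^sub>1, n\<^sub>2). card (D_set S (n\<^sub>1 + d) \<union> D_set S (n\<^sub>2 + d))) ` {(n\<^sub>1, n\<^sub>2). m \<le> n\<^sub>1 \<and> n\<^sub>1 < n\<^sub>2})"
proof -
  have "{card (D_set S m\<^sub>1 \<union> D_set S m\<^sub>2) | m\<^sub>1 m\<^sub>2. m + d \<le> m\<^sub>1 \<and> m\<^sub>1 < m\<^sub>2 \<and> m\<^sub>1 \<in> S \<and> m\<^sub>2 \<in> S} =
    (\<lambda>(n\<^sub>1, n\<^sub>2). card (D_set S (n\<^sub>1 + d) \<union> D_set S (n\<^sub>2 + d))) ` {(n\<^sub>1, n\<^sub>2). m \<le> n\<^sub>1 \<and> n\<^sub>1 < n\<^sub>2}"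
  proof (intro equalityI subsetI)
    fix u assume "u \<in> {card (D_set S m\<^sub>1 \<union> D_set S m\<^sub>2) | m\<^sub>1 m\<^sub>2. m + d \<le> m\<^sub>1 \<and> m\<^sub>1 < m\<^sub>2 \<and> m\<^sub>1 \<in> S \<and> m\<^sub>2 \<in> S}"
    then obtain m\<^sub>1 m\<^sub>2 where "u = card (D_set S m\<^sub>1 \<union> D_set S m\<^sub>2)" "m + d \<le> m\<^sub>1" "m\<^sub>1 < m\<^sub>2" by blast
    thus "u \<in> (\<lambda>(n\<^sub>1, n\<^sub>2). card (D_set S (n\<^sub>1 + d) \<union> D_set S (n\<^sub>2 + d))) ` {(n\<^sub>1, n\<^sub>2). m \<le> n\<^sub>1 \<and> n\<^sub>1 < n\<^sub>2}"
      by (intro image_eqI[where x = "(m\<^sub>1 - d, m\<^sub>2 - d)"]) auto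
  next
    fix u assume "u \<in> (\<lambda>(n\<^sub>1, n\<^sub>2). card (D_set S (n\<^sub>1 + d) \<union> D_set S (n\<^sub>2 + d))) ` {(n\<^sub>1, n\<^sub>2). m \<le> n\<^sub>1 \<and> n\<^sub>1 < n\<^sub>2}"
    then obtain n\<^sub>1 n\<^sub>2 where "u = card (D_set S (n\<^sub>1 + d) \<union> D_set S (n\<^sub>2 + d))" "m \<le> n\<^sub>1" "n\<^sub>1 < n\<^sub>2" by auto
    moreover have "n\<^sub>1 + d \<in> S" "n\<^sub>2 + d \<in> S" using assms \<open>m \<le> n\<^sub>1\<close> \<open>n\<^sub>1 < n\<^sub>2\<close> by simp_all
    ultimately show "u \<in> {card (D_set S m\<^sub>1 \<union> D_set S m\<^sub>2) | m\<^sub>1 m\<^sub>2. m + d \<le> m\<^sub>1 \<and> m\<^sub>1 < m\<^sub>2 \<and> m\<^sub>1 \<in> S \<and> m\<^sub>2 \<in> S}"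
      by fastforce
  qed
  thus ?thesis unfolding delta2_def by simp
qed

lemma delta2_above_conductor:
  assumes "numerical_semigroup S"
  shows "delta2 S (conductor S + k) = Inf ((\<lambda>p. card (D_set S (fst p) \<union> D_set S (snd p))) `
    {(n\<^sub>1, n\<^sub>2). conductor S + k \<le> n\<^sub>1 \<and> n\<^sub>1 < n\<^sub>2})"
  using delta2_cofinite[of "conductor S + k" 0 S] numerical_semigroup_ge_conductor[OF assms]
  by (simp add: case_prod_beta)

lemma delta2_shift_ns:
  assumes "numerical_semigroup S" "a \<noteq> 0"
  shows "delta2 (shift_ns a S) (conductor S + k + 2 * a) =
    Inf ((\<lambda>p. (if fst p + a \<in> D_set S (snd p) then 2 else 3) + card (D_set S (fst p) \<union> D_set S (snd p))) `
      {(n\<^sub>1, n\<^sub>2). conductor S + k \<le> n\<^sub>1 \<and> n\<^sub>1 < n\<^sub>2})"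
proof -
  have above: "n \<in> S" if "conductor S \<le> n" for n
    using numerical_semigroup_ge_conductor[OF assms(1) that] .
  have "\<forall>n\<ge>conductor S + k + 2 * a. n \<in> shift_ns a S"
  proof (intro allI impI)
    fix n assume "conductor S + k + 2 * a \<le> n"
    hence "n = a + (n - a)" "n - a \<in> S" using above by simp_all
    thus "n \<in> shift_ns a S" unfolding shift_ns_def by blast
  qed
  from delta2_cofinite[OF this] show ?thesis
    using card_D_set_shift_ns[OF assms(2)] above by (auto intro!: arg_cong[where f = Inf] image_cong)
qed

theorem lemma4p13:
  fixes \<Gamma> :: "nat set" and e c e' :: nat
  assumes "numerical_semigroup \<Gamma>"
    and "Arf \<Gamma>"
    and "e = multiplicity_ns \<Gamma>"
    and "c = conductor \<Gamma>"
    and "e' \<in> \<Gamma>" and "e' \<noteq> 0" and "e' \<noteq> e"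
  shows "\<forall>k::nat. delta2 ({0} \<union> (\<lambda>s. e' + s) ` \<Gamma>) (c + e' + e' + k) = delta2 \<Gamma> (c + k) + 3"
proof
  fix k
  define P where "P = {(n\<^sub>1, n\<^sub>2). c + k \<le> n\<^sub>1 \<and> n\<^sub>1 < n\<^sub>2}"
  define f where "f p = card (D_set \<Gamma> (fst p) \<union> D_set \<Gamma> (snd p))" for p
  have "e < e'" and "e \<noteq> 0"
    using multiplicity_ns[OF assms(1)] assms(3,5-7) by (auto simp: le_neq_implies_less)
  have "delta2 (shift_ns e' \<Gamma>) (c + k + 2 * e') =
      Inf ((\<lambda>p. (if fst p + e' \<in> D_set \<Gamma> (snd p) then 2 else 3) + f p) ` P)"
    using delta2_shift_ns[OF assms(1,6)] unfolding assms(4) P_def f_def .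
  also have "\<dots> = Inf (f ` P) + 3"
  proof (rule cInf_image_add_penalty)
    show "P \<noteq> {}" by (auto simp: P_def)
  next
    fix p assume "p \<in> P" "fst p + e' \<in> D_set \<Gamma> (snd p)"
    thus "\<exists>q\<in>P. f q < f p"
      using card_union_D_set_not_minimal[OF assms(1-3,5) \<open>e < e'\<close>, of "fst p" "snd p"] assms(4) \<open>e \<noteq> 0\<close>
      by (intro bexI[of _ "(fst p, fst p + e)"]) (auto simp: P_def f_def)
  qed
  also have "Inf (f ` P) = delta2 \<Gamma> (c + k)"
    using delta2_above_conductor[OF assms(1)] unfolding assms(4) P_def f_def by simp
  finally have "delta2 (shift_ns e' \<Gamma>) (c + k + 2 * e') = delta2 \<Gamma> (c + k) + 3" .
  moreover have "c + k + 2 * e' = c + e' + e' + k" by simp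
  ultimately show "delta2 ({0} \<union> (\<lambda>s. e' + s) ` \<Gamma>) (c + e' + e' + k) = delta2 \<Gamma> (c + k) + 3"
    unfolding shift_ns_def by (simp only:)
qed

end
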